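(* For every $g\ge 1$, $\det(A_g)=4^{\frac{1}{9}\cdot 4^g+\frac{2}{3}g-\frac{1}{9}}$.
   Context: The graphs $\mathcal{H}_g$ with hubs $v_1,v_2,v_3,v_4$ and orientations $\mathcal{H}_g^e$ are defined recursively. $\mathcal{H}_1$ is the 4-cycle with edges $\{v_1,v_2\},\{v_1,v_3\},\{v_2,v_4\},\{v_3,v_4\}$, oriented $v_1\to v_2$, $v_1\to v_3$, $v_4\to v_2$, $v_3\to v_4$. For $g>1$, take four disjoint copies $\mathcal{H}_{g-1}^{(i)}$, $i=1,\dots,4$, of $\mathcal{H}_{g-1}$, each oriented as a copy of $\mathcal{H}_{g-1}^e$, with hubs $v_k^{(i)}$; identify $v_1^{(1)},v_1^{(4)}$ as $v_1$, $v_2^{(2)},v_1^{(3)}$ as $v_4$, $v_2^{(1)},v_1^{(2)}$ as $v_3$, and $v_2^{(3)},v_2^{(4)}$ as $v_2$; $\mathcal{H}_g^e$ is the union of the copies' orientations. $A_g$ is the skew adjacency matrix of $\mathcal{H}_g^e$: its $(u,v)$ entry is $1$ if $u\to v$ is an arc, $-1$ if $v\to u$ is an arc, and $0$ otherwise. *)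

theory Defs
  imports Complex_Main "Jordan_Normal_Form.Determinant"
begin

(* Vertices of H_g are the naturals 0 ..< hg_nv g.  The hubs are
   v1 = 0, v2 = 1, v3 = 2, v4 = 3. *)

fun hg_nv :: "nat \<Rightarrow> nat" where
  "hg_nv 0 = 0"
| "hg_nv (Suc 0) = 4"
| "hg_nv (Suc (Suc g)) = 4 * hg_nv (Suc g) - 4"

(* Embedding of vertex x of copy i (i = 0..3, standing for copies 1..4) of
   H_{g-1} (which has n vertices) into H_g:
   copy 1: v1 -> v1, v2 -> v3;  copy 2: v1 -> v3, v2 -> v4;
   copy 3: v1 -> v4, v2 -> v2;  copy 4: v1 -> v1, v2 -> v2;
   all other vertices of the copies receive fresh, distinct labels. *)
definition hg_emb :: "nat \<Rightarrow> nat \<Rightarrow> nat \<Rightarrow> nat" where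
  "hg_emb n i x =
     (if x = 0 then [0, 2, 3, 0] ! i
      else if x = 1 then [2, 3, 1, 1] ! i
      else 4 + i * (n - 2) + (x - 2))"

fun hg_arcs :: "nat \<Rightarrow> (nat \<times> nat) set" where
  "hg_arcs 0 = {}"
| "hg_arcs (Suc 0) = {(0, 1), (0, 2), (3, 1), (2, 3)}"
| "hg_arcs (Suc (Suc g)) =
     (\<Union>i<4. (\<lambda>(a, b). (hg_emb (hg_nv (Suc g)) i a, hg_emb (hg_nv (Suc g)) i b))
              ` hg_arcs (Suc g))"

definition skew_adj :: "nat \<Rightarrow> int mat" where
  "skew_adj g = mat (hg_nv g) (hg_nv g)
     (\<lambda>(u, v). if (u, v) \<in> hg_arcs g then 1
               else if (v, u) \<in> hg_arcs g then -1 else 0)"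

end

theory Submission
  imports Defs
begin

text \<open>
  Order the vertices of H_(g+2) as its four hubs followed by the four copies of H_(g+1) with
  their hubs v1, v2 removed. The copies meet only at the hubs, so taking the Schur complement
  of the block diagonal made of the four interior blocks B of A_(g+1) gives
  det A_(g+2) = det B^4 * det R, where R is the hub matrix A_1 corrected by one skew 2 x 2
  matrix W = C B^-1 Z per copy. Copy c is glued onto an arc of H_1, and H_1 consists of exactly
  these four arcs, so R = s A_1 with s = 1 - W_01. The same computation on the interior block of
  A_(g+2) gives det B^4 * s^2, and the Schur complement of B in A_(g+1) itself gives
  det A_(g+1) = det B * s^2. Starting from det A_1 = 4 and det B_1 = 1, both determinants are
  powers of 4: the exponent e_g of the interior block satisfies e_(g+1) = 4 e_g + g, and
  det A_g = 4^(e_g + g).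
\<close>

section \<open>Determinants of skew-symmetric block matrices\<close>

lemma obtain_right_inverse_mat:
  fixes B :: "'a :: field mat"
  assumes B: "B \<in> carrier_mat n n" and "det B \<noteq> 0"
  obtains Bi where "Bi \<in> carrier_mat n n" "B * Bi = 1\<^sub>m n"
  using det_non_zero_imp_unit[OF assms, unfolded Units_def, of "()"] that
  by (auto simp: ring_mat_def)

lemma det_schur_complement:
  fixes X :: "'a :: idom mat"
  assumes X: "X \<in> carrier_mat k k" and Y: "Y \<in> carrier_mat k m"
    and Z: "Z \<in> carrier_mat m k" and B: "B \<in> carrier_mat m m"
    and Bi: "Bi \<in> carrier_mat m m" and inv: "B * Bi = 1\<^sub>m m"
  shows "det (four_block_mat X Y Z B) = det B * det (X - Y * Bi * Z)"
proof -
  let ?M = "four_block_mat X Y Z B"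
  let ?E = "four_block_mat (1\<^sub>m k) (0\<^sub>m k m) (- (Bi * Z)) (1\<^sub>m m)"
  have M: "?M \<in> carrier_mat (k + m) (k + m)" using X Y Z B by auto
  have E: "?E \<in> carrier_mat (k + m) (k + m)" using Bi Z by auto
  have "?M * ?E = four_block_mat (X * 1\<^sub>m k + Y * (- (Bi * Z))) (X * 0\<^sub>m k m + Y * 1\<^sub>m m)
      (Z * 1\<^sub>m k + B * (- (Bi * Z))) (Z * 0\<^sub>m k m + B * 1\<^sub>m m)"
    by (rule mult_four_block_mat) (use X Y Z B Bi in auto)
  also have "Z * 1\<^sub>m k + B * (- (Bi * Z)) = 0\<^sub>m m k"
  proof -
    have "B * (- (Bi * Z)) = - ((B * Bi) * Z)" using B Bi Z by (simp add: assoc_mult_mat)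
    also have "\<dots> = - Z" using inv Z by simp
    finally show ?thesis using Z by auto
  qed
  also have "X * 1\<^sub>m k + Y * (- (Bi * Z)) = X - Y * Bi * Z"
    using X Y Z Bi by (auto simp: assoc_mult_mat mult_minus_distrib_mat)
  also have "X * 0\<^sub>m k m + Y * 1\<^sub>m m = Y" using X Y by auto
  also have "Z * 0\<^sub>m k m + B * 1\<^sub>m m = B" using Z B by auto
  finally have ME: "?M * ?E = four_block_mat (X - Y * Bi * Z) Y (0\<^sub>m m k) B" .
  have "det ?M * det ?E = det (?M * ?E)" using det_mult[OF M E] by simp
  also have "\<dots> = det (X - Y * Bi * Z) * det B"
    unfolding ME by (rule det_four_block_mat_lower_left_zero) (use X Y Z B Bi in auto)
  also have "det ?E = 1"
    by (subst det_four_block_mat_upper_right_zero) (use Bi Z in auto)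
  finally show ?thesis by simp
qed

lemma transpose_right_inverse_skew:
  fixes B :: "'a :: comm_ring_1 mat"
  assumes B: "B \<in> carrier_mat n n" and Bi: "Bi \<in> carrier_mat n n" and inv: "B * Bi = 1\<^sub>m n"
    and skew: "B\<^sup>T = - B"
  shows "Bi\<^sup>T = - Bi"
proof -
  have "Bi\<^sup>T * B = - 1\<^sub>m n"
  proof -
    have "Bi\<^sup>T * B\<^sup>T = 1\<^sub>m n" using transpose_mult[OF B Bi] inv by simp
    then have "- (Bi\<^sup>T * B) = 1\<^sub>m n" using skew B Bi by simp
    then show ?thesis by (metis uminus_uminus_mat)
  qed
  have "Bi\<^sup>T = (Bi\<^sup>T * B) * Bi" using inv B Bi by (simp add: assoc_mult_mat)
  also have "\<dots> = - Bi" using \<open>Bi\<^sup>T * B = - 1\<^sub>m n\<close> Bi by simp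
  finally show ?thesis .
qed

lemma transpose_sandwich_skew:
  fixes C :: "'a :: comm_ring_1 mat"
  assumes C: "C \<in> carrier_mat k m" and Bi: "Bi \<in> carrier_mat m m" and Z: "Z \<in> carrier_mat m k"
    and ZC: "Z\<^sup>T = - C" and Bi_skew: "Bi\<^sup>T = - Bi"
  shows "(C * Bi * Z)\<^sup>T = - (C * Bi * Z)"
proof -
  have "C = - Z\<^sup>T" using ZC by simp
  then have CZ: "C\<^sup>T = - Z" by (simp add: transpose_uminus)
  have "(C * Bi * Z)\<^sup>T = Z\<^sup>T * (C * Bi)\<^sup>T"
    using C Bi Z by (intro transpose_mult) auto
  also have "\<dots> = - C * (- Bi * - Z)"
    unfolding transpose_mult[OF C Bi] ZC Bi_skew CZ ..
  also have "\<dots> = - (C * (Bi * Z))" using C Bi Z by simp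
  also have "C * (Bi * Z) = C * Bi * Z" using C Bi Z by (simp add: assoc_mult_mat)
  finally show ?thesis .
qed

lemma transpose_minus_skew:
  fixes X W :: "'a :: ab_group_add mat"
  assumes X: "X \<in> carrier_mat n n" and W: "W \<in> carrier_mat n n"
    and "X\<^sup>T = - X" "W\<^sup>T = - W"
  shows "(X - W)\<^sup>T = - (X - W)"
proof -
  have "(X - W)\<^sup>T = - X - - W" using assms by (simp add: transpose_minus)
  also have "\<dots> = - (X - W)" by (rule eq_matI) (use X W in auto)
  finally show ?thesis .
qed

lemma sum_lessThan_2: "(\<Sum>a<2. f a) = f 0 + f (1 :: nat)"
  by (simp add: numeral_2_eq_2)

lemma sum_lessThan_4: "(\<Sum>c<4. f c) = f 0 + f 1 + f 2 + f (3 :: nat)"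
  by (simp add: eval_nat_numeral)

lemma det_mat_2x2:
  "det (mat 2 2 f :: 'a :: comm_ring_1 mat) = f (0, 0) * f (1, 1) - f (0, 1) * f (1, 0)"
proof -
  have "det (mat 2 2 f) = (\<Sum>j<2. mat 2 2 f $$ (0, j) * cofactor (mat 2 2 f) 0 j)"
    by (rule laplace_expansion_row) auto
  then show ?thesis
    by (simp add: cofactor_def mat_delete_def det_single numeral_2_eq_2 lessThan_Suc)
qed

lemma det_mat_3x3:
  "det (mat 3 3 f :: 'a :: comm_ring_1 mat) =
    f (0, 0) * (f (1, 1) * f (2, 2) - f (1, 2) * f (2, 1))
    - f (0, 1) * (f (1, 0) * f (2, 2) - f (1, 2) * f (2, 0))
    + f (0, 2) * (f (1, 0) * f (2, 1) - f (1, 1) * f (2, 0))"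
proof -
  have det2: "det (mat (Suc (Suc 0)) (Suc (Suc 0)) g) = g (0, 0) * g (1, 1) - g (0, 1) * g (1, 0)"
    for g :: "nat \<times> nat \<Rightarrow> 'a"
    using det_mat_2x2[of g] by (simp add: numeral_2_eq_2)
  have "det (mat 3 3 f) = (\<Sum>j<3. mat 3 3 f $$ (0, j) * cofactor (mat 3 3 f) 0 j)"
    by (rule laplace_expansion_row) auto
  also have "\<dots> = f (0, 0) * (f (1, 1) * f (2, 2) - f (1, 2) * f (2, 1))
    - f (0, 1) * (f (1, 0) * f (2, 2) - f (1, 2) * f (2, 0))
    + f (0, 2) * (f (1, 0) * f (2, 1) - f (1, 1) * f (2, 0))"
    unfolding cofactor_def mat_delete_def
    by (simp add: det2 numeral_3_eq_3 numeral_2_eq_2 lessThan_Suc algebra_simps)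
  finally show ?thesis .
qed

lemma det_mat_4x4:
  "det (mat 4 4 f :: 'a :: comm_ring_1 mat) = (\<Sum>j<4. (-1) ^ j * f (0, j) *
    det (mat 3 3 (\<lambda>(i, k). f (Suc i, if k < j then k else Suc k))))"
proof -
  have "det (mat 4 4 f) = (\<Sum>j<4. mat 4 4 f $$ (0, j) * cofactor (mat 4 4 f) 0 j)"
    by (rule laplace_expansion_row) auto
  also have "\<dots> = (\<Sum>j<4. (-1) ^ j * f (0, j) *
    det (mat 3 3 (\<lambda>(i, k). f (Suc i, if k < j then k else Suc k))))"
  proof (intro sum.cong refl)
    fix j :: nat
    assume "j \<in> {..<4}"
    then have "mat_delete (mat 4 4 f) 0 j = mat 3 3 (\<lambda>(i, k). f (Suc i, if k < j then k else Suc k))"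
      by (intro eq_matI) (auto simp: mat_delete_def)
    then show "mat 4 4 f $$ (0, j) * cofactor (mat 4 4 f) 0 j =
      (-1) ^ j * f (0, j) * det (mat 3 3 (\<lambda>(i, k). f (Suc i, if k < j then k else Suc k)))"
      using \<open>j \<in> {..<4}\<close> by (simp add: cofactor_def)
  qed
  finally show ?thesis .
qed

lemma skew_mat_2x2_entries:
  fixes W :: "'a :: {idom, ring_char_0} mat"
  assumes W: "W \<in> carrier_mat 2 2" and skew: "W\<^sup>T = - W"
  shows "W $$ (0, 0) = 0" "W $$ (1, 1) = 0" "W $$ (1, 0) = - W $$ (0, 1)"
proof -
  have e: "W $$ (j, i) = - W $$ (i, j)" if "i < 2" "j < 2" for i j
    using arg_cong[OF skew, of "\<lambda>A. A $$ (i, j)"] W that by simp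
  from e[of 0 0] e[of 1 1] e[of 0 1]
  show "W $$ (0, 0) = 0" "W $$ (1, 1) = 0" "W $$ (1, 0) = - W $$ (0, 1)"
    by simp_all
qed

lemma det_skew_mat_2x2:
  fixes A :: "'a :: {idom, ring_char_0} mat"
  assumes A: "A \<in> carrier_mat 2 2" and skew: "A\<^sup>T = - A"
  shows "det A = A $$ (0, 1) ^ 2"
proof -
  have "A = mat 2 2 (\<lambda>(i, j). A $$ (i, j))" by (rule eq_matI) (use A in auto)
  then have "det A = A $$ (0, 0) * A $$ (1, 1) - A $$ (0, 1) * A $$ (1, 0)"
    using det_mat_2x2[of "\<lambda>(i, j). A $$ (i, j)"] by simp
  then show ?thesis using skew_mat_2x2_entries[OF A skew] by (simp add: power2_eq_square)
qed

lemma skew_mat_2x2_pair_sum: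
  fixes W :: "'a :: {idom, ring_char_0} mat" and p :: "nat \<Rightarrow> 'b"
  assumes W: "W \<in> carrier_mat 2 2" and skew: "W\<^sup>T = - W"
  shows "(\<Sum>a<2. \<Sum>b<2. if p a = u \<and> p b = v then W $$ (a, b) else 0) =
    W $$ (0, 1) * ((if p 0 = u \<and> p 1 = v then 1 else 0) - (if p 1 = u \<and> p 0 = v then 1 else 0))"
  using skew_mat_2x2_entries[OF W skew] unfolding sum_lessThan_2
  by (cases "p 0 = u"; cases "p 1 = u"; cases "p 0 = v"; cases "p 1 = v") simp_all

definition lower_right_block :: "nat \<Rightarrow> 'a mat \<Rightarrow> 'a mat" where
  "lower_right_block d A = mat (dim_row A - d) (dim_col A - d) (\<lambda>(i, j). A $$ (i + d, j + d))"

lemma split_block_lower_right: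
  "split_block A d d = (X, C, Z, B) \<Longrightarrow> B = lower_right_block d A"
  by (simp add: split_block_def lower_right_block_def Let_def)

lemma split_block_skew:
  fixes A :: "'a :: comm_ring_1 mat"
  assumes A: "A \<in> carrier_mat (d + m) (d + m)" and skew: "A\<^sup>T = - A"
    and split: "split_block A d d = (X, C, Z, B)"
  shows "X\<^sup>T = - X" "Z\<^sup>T = - C" "B\<^sup>T = - B"
proof -
  have e: "A $$ (j, i) = - A $$ (i, j)" if "i < d + m" "j < d + m" for i j
    using arg_cong[OF skew, of "\<lambda>M. M $$ (i, j)"] A that by simp
  have X: "X = mat d d (\<lambda>(i, j). A $$ (i, j))"
    and C: "C = mat d m (\<lambda>(i, j). A $$ (i, j + d))"
    and Z: "Z = mat m d (\<lambda>(i, j). A $$ (i + d, j))"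
    and B: "B = mat m m (\<lambda>(i, j). A $$ (i + d, j + d))"
    using split A by (auto simp: split_block_def Let_def)
  show "X\<^sup>T = - X"
  proof (rule eq_matI)
    fix i j assume "i < dim_row (- X)" "j < dim_col (- X)"
    then show "X\<^sup>T $$ (i, j) = (- X) $$ (i, j)" using e[of i j] X by simp
  qed (simp_all add: X)
  show "Z\<^sup>T = - C"
  proof (rule eq_matI)
    fix i j assume "i < dim_row (- C)" "j < dim_col (- C)"
    then show "Z\<^sup>T $$ (i, j) = (- C) $$ (i, j)" using e[of i "j + d"] C Z by simp
  qed (simp_all add: C Z)
  show "B\<^sup>T = - B"
  proof (rule eq_matI)
    fix i j assume "i < dim_row (- B)" "j < dim_col (- B)"
    then show "B\<^sup>T $$ (i, j) = (- B) $$ (i, j)" using e[of "i + d" "j + d"] B by simp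
  qed (simp_all add: B)
qed

lemma split_block_skew_sandwich:
  fixes A :: "'a :: comm_ring_1 mat"
  assumes A: "A \<in> carrier_mat (d + m) (d + m)" and skew: "A\<^sup>T = - A"
    and split: "split_block A d d = (X, C, Z, B)"
    and Bi: "Bi \<in> carrier_mat m m" and inv: "B * Bi = 1\<^sub>m m"
  shows "(C * Bi * Z)\<^sup>T = - (C * Bi * Z)"
proof -
  have blocks: "C \<in> carrier_mat d m" "Z \<in> carrier_mat m d" "B \<in> carrier_mat m m"
    using split_block(2-4)[OF split, of m m] A by auto
  have "Bi\<^sup>T = - Bi"
    using blocks(3) Bi inv split_block_skew(3)[OF A skew split] by (rule transpose_right_inverse_skew)
  then show ?thesis
    by (rule transpose_sandwich_skew[OF blocks(1) Bi blocks(2) split_block_skew(2)[OF A skew split]])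
qed

lemma det_skew_split_block_2:
  fixes A :: "'a :: field_char_0 mat"
  assumes A: "A \<in> carrier_mat (2 + m) (2 + m)" and skew: "A\<^sup>T = - A"
    and split: "split_block A 2 2 = (X, C, Z, B)"
    and Bi: "Bi \<in> carrier_mat m m" and inv: "B * Bi = 1\<^sub>m m"
  shows "det A = det B * (A $$ (0, 1) - (C * Bi * Z) $$ (0, 1)) ^ 2"
proof -
  have blocks: "X \<in> carrier_mat 2 2" "C \<in> carrier_mat 2 m" "Z \<in> carrier_mat m 2"
    "B \<in> carrier_mat m m"
    using split_block(1-4)[OF split, of m m] A by auto
  have A_blocks: "A = four_block_mat X C Z B"
    using split_block(5)[OF split, of m m] A by auto
  have W: "C * Bi * Z \<in> carrier_mat 2 2" using blocks Bi by auto
  have XW: "X - C * Bi * Z \<in> carrier_mat 2 2" using blocks W by auto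
  have XW_skew: "(X - C * Bi * Z)\<^sup>T = - (X - C * Bi * Z)"
    using split_block_skew[OF A skew split] split_block_skew_sandwich[OF A skew split Bi inv] blocks(1) W
    by (intro transpose_minus_skew)
  have "det A = det B * det (X - C * Bi * Z)"
    unfolding A_blocks using blocks Bi inv by (rule det_schur_complement)
  also have "det (X - C * Bi * Z) = (X - C * Bi * Z) $$ (0, 1) ^ 2"
    by (rule det_skew_mat_2x2[OF XW XW_skew])
  also have "(X - C * Bi * Z) $$ (0, 1) = X $$ (0, 1) - (C * Bi * Z) $$ (0, 1)"
    using blocks(1) W by (intro index_minus_mat) auto
  also have "X $$ (0, 1) = A $$ (0, 1)"
    using split by (auto simp: split_block_def Let_def)
  finally show ?thesis .
qed

section \<open>Hubs with attached copies of a block\<close>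

definition attach_mat :: "nat \<Rightarrow> (nat \<Rightarrow> nat) \<Rightarrow> nat \<Rightarrow> nat \<Rightarrow> 'a :: zero_neq_one mat" where
  "attach_mat h att n r = mat n r (\<lambda>(u, a). if u < h \<and> att a = u then 1 else 0)"

lemma attach_mat_dim [simp]:
  "dim_row (attach_mat h att n r) = n" "dim_col (attach_mat h att n r) = r"
  by (simp_all add: attach_mat_def)

lemma attach_mat_carrier [simp]: "attach_mat h att n r \<in> carrier_mat n r"
  by (simp add: carrier_matI)

lemma attach_sandwich_entry:
  fixes W :: "'a :: comm_ring_1 mat"
  assumes W: "W \<in> carrier_mat r r" and u: "u < n" and v: "v < n"
  shows "(attach_mat h att n r * W * (attach_mat h att n r)\<^sup>T) $$ (u, v) =
    (if u < h \<and> v < h then \<Sum>a<r. \<Sum>b<r. if att a = u \<and> att b = v then W $$ (a, b) else 0 else 0)"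
proof -
  let ?Q = "attach_mat h att n r :: 'a mat"
  have "(?Q * W * ?Q\<^sup>T) $$ (u, v) = (\<Sum>b<r. (\<Sum>a<r. ?Q $$ (u, a) * W $$ (a, b)) * ?Q $$ (v, b))"
    using W u v by (simp add: scalar_prod_def lessThan_atLeast0 row_def col_def)
  also have "\<dots> = (\<Sum>b<r. \<Sum>a<r. ?Q $$ (u, a) * W $$ (a, b) * ?Q $$ (v, b))"
    by (simp add: sum_distrib_right)
  also have "\<dots> = (\<Sum>a<r. \<Sum>b<r. ?Q $$ (u, a) * W $$ (a, b) * ?Q $$ (v, b))"
    by (rule sum.swap)
  finally show ?thesis
    using u v by (auto simp: attach_mat_def intro!: sum.cong)
qed

text \<open>
  Indices below h are hubs; index h + c * m + x is vertex x of the c-th copy of the m x m block B.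
  The r rows of C (columns of Z) belong to the attaching vertices of a copy: those of copy c are
  glued to the hubs att c 0, ..., att c (r - 1), and a value \<open>\<ge> h\<close> means "not attached".
\<close>
definition hub_blocks ::
  "nat \<Rightarrow> (nat \<Rightarrow> nat \<Rightarrow> nat) \<Rightarrow> nat \<Rightarrow> nat \<Rightarrow> 'a mat \<Rightarrow> 'a mat \<Rightarrow> 'a mat \<Rightarrow> 'a mat \<Rightarrow> nat \<Rightarrow>
    'a :: comm_monoid_add mat" where
  "hub_blocks h att r m T C Z B k = mat (h + k * m) (h + k * m) (\<lambda>(u, v).
     if u < h then
       if v < h then T $$ (u, v)
       else \<Sum>a<r. if att ((v - h) div m) a = u then C $$ (a, (v - h) mod m) else 0
     else if v < h then \<Sum>a<r. if att ((u - h) div m) a = v then Z $$ ((u - h) mod m, a) else 0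
     else if (u - h) div m = (v - h) div m then B $$ ((u - h) mod m, (v - h) mod m) else 0)"

lemma hub_blocks_dim [simp]:
  "dim_row (hub_blocks h att r m T C Z B k) = h + k * m"
  "dim_col (hub_blocks h att r m T C Z B k) = h + k * m"
  by (simp_all add: hub_blocks_def)

lemma hub_blocks_carrier [simp]: "hub_blocks h att r m T C Z B k \<in> carrier_mat (h + k * m) (h + k * m)"
  by (simp add: carrier_matI)

lemma hub_blocks_0:
  assumes "T \<in> carrier_mat h h"
  shows "hub_blocks h att r m T C Z B 0 = T"
  by (rule eq_matI) (use assms in \<open>auto simp: hub_blocks_def\<close>)

lemma div_mod_last_block:
  fixes x :: nat
  assumes "h + k * m \<le> x" "x < h + k * m + m"
  shows "(x - h) div m = k" "(x - h) mod m = x - (h + k * m)"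
proof -
  have "x - h = (x - (h + k * m)) + k * m" and "x - (h + k * m) < m" using assms by auto
  then show "(x - h) div m = k" "(x - h) mod m = x - (h + k * m)" by simp_all
qed

lemma hub_blocks_Suc:
  fixes T :: "'a :: comm_ring_1 mat" and att :: "nat \<Rightarrow> nat \<Rightarrow> nat" and h k :: nat
  assumes C: "C \<in> carrier_mat r m" and Z: "Z \<in> carrier_mat m r" and B: "B \<in> carrier_mat m m"
  defines "Q \<equiv> attach_mat h (att k) (h + k * m) r"
  shows "hub_blocks h att r m T C Z B (Suc k) =
    four_block_mat (hub_blocks h att r m T C Z B k) (Q * C) (Z * Q\<^sup>T) B"
proof (rule eq_matI)
  let ?N = "h + k * m"
  fix u v
  assume "u < dim_row (four_block_mat (hub_blocks h att r m T C Z B k) (Q * C) (Z * Q\<^sup>T) B)"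
    and "v < dim_col (four_block_mat (hub_blocks h att r m T C Z B k) (Q * C) (Z * Q\<^sup>T) B)"
  then have u: "u < ?N + m" and v: "v < ?N + m" using B by (auto simp: Q_def)
  have earlier: "(x - h) div m < k" if "h \<le> x" "x < ?N" for x
    using that by (intro less_mult_imp_div_less) auto
  note last = div_mod_last_block[of h k m]
  have QC: "(Q * C) $$ (x, y) = (\<Sum>a<r. if x < h \<and> att k a = x then C $$ (a, y) else 0)"
    if "x < ?N" "y < m" for x y
    using that C by (auto simp: Q_def attach_mat_def scalar_prod_def lessThan_atLeast0 intro!: sum.cong)
  have ZQ: "(Z * Q\<^sup>T) $$ (x, y) = (\<Sum>a<r. if y < h \<and> att k a = y then Z $$ (x, a) else 0)"
    if "x < m" "y < ?N" for x y
    using that Z by (auto simp: Q_def attach_mat_def scalar_prod_def lessThan_atLeast0 intro!: sum.cong)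
  show "hub_blocks h att r m T C Z B (Suc k) $$ (u, v) =
    four_block_mat (hub_blocks h att r m T C Z B k) (Q * C) (Z * Q\<^sup>T) B $$ (u, v)"
  proof (cases "u < ?N"; cases "v < ?N")
    assume "u < ?N" "v < ?N"
    then show ?thesis using B by (simp add: hub_blocks_def Q_def)
  next
    assume "u < ?N" "\<not> v < ?N"
    then show ?thesis using u v B C earlier[of u] last[of v] QC[of u "v - ?N"]
      by (cases "u < h") (auto simp: hub_blocks_def Q_def intro!: sum.cong)
  next
    assume "\<not> u < ?N" "v < ?N"
    then show ?thesis using u v B Z earlier[of v] last[of u] ZQ[of "u - ?N" v]
      by (cases "v < h") (auto simp: hub_blocks_def Q_def intro!: sum.cong)
  next
    assume "\<not> u < ?N" "\<not> v < ?N"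
    then show ?thesis using u v B last[of u] last[of v] by (simp add: hub_blocks_def Q_def)
  qed
qed (use B in \<open>auto simp: hub_blocks_def Q_def\<close>)

lemma hub_blocks_minus_attach_sandwich:
  fixes T :: "'a :: comm_ring_1 mat" and att :: "nat \<Rightarrow> nat \<Rightarrow> nat" and k m :: nat
  assumes T: "T \<in> carrier_mat h h" and W: "W \<in> carrier_mat r r"
  defines "Q \<equiv> attach_mat h (att k) (h + k * m) r" and "Q' \<equiv> attach_mat h (att k) h r"
  shows "hub_blocks h att r m T C Z B k - Q * W * Q\<^sup>T =
    hub_blocks h att r m (T - Q' * W * Q'\<^sup>T) C Z B k"
proof (rule eq_matI)
  fix u v
  assume "u < dim_row (hub_blocks h att r m (T - Q' * W * Q'\<^sup>T) C Z B k)"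
    and "v < dim_col (hub_blocks h att r m (T - Q' * W * Q'\<^sup>T) C Z B k)"
  then have u: "u < h + k * m" and v: "v < h + k * m" by auto
  have "(Q * W * Q\<^sup>T) $$ (u, v) = (if u < h \<and> v < h then (Q' * W * Q'\<^sup>T) $$ (u, v) else 0)"
    unfolding Q_def Q'_def using attach_sandwich_entry[OF W] u v by auto
  then show "(hub_blocks h att r m T C Z B k - Q * W * Q\<^sup>T) $$ (u, v) =
    hub_blocks h att r m (T - Q' * W * Q'\<^sup>T) C Z B k $$ (u, v)"
    using u v T W by (auto simp: hub_blocks_def Q_def Q'_def)
qed (auto simp: Q_def)

text \<open>The hub block after eliminating the k copies; W stands for C B^-1 Z.\<close>
definition hub_reduction ::
  "nat \<Rightarrow> (nat \<Rightarrow> nat \<Rightarrow> nat) \<Rightarrow> nat \<Rightarrow> 'a mat \<Rightarrow> 'a mat \<Rightarrow> nat \<Rightarrow> 'a :: ab_group_add mat" where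
  "hub_reduction h att r W T k = mat h h (\<lambda>(u, v). T $$ (u, v) -
     (\<Sum>c<k. \<Sum>a<r. \<Sum>b<r. if att c a = u \<and> att c b = v then W $$ (a, b) else 0))"

lemma hub_reduction_0:
  assumes "T \<in> carrier_mat h h"
  shows "hub_reduction h att r W T 0 = T"
  by (rule eq_matI) (use assms in \<open>auto simp: hub_reduction_def\<close>)

lemma hub_reduction_Suc:
  fixes T :: "'a :: comm_ring_1 mat"
  assumes T: "T \<in> carrier_mat h h" and W: "W \<in> carrier_mat r r"
  shows "hub_reduction h att r W T (Suc k) =
    hub_reduction h att r W (T - attach_mat h (att k) h r * W * (attach_mat h (att k) h r)\<^sup>T) k"
proof (rule eq_matI)
  fix u v
  assume "u < dim_row (hub_reduction h att r W
    (T - attach_mat h (att k) h r * W * (attach_mat h (att k) h r)\<^sup>T) k)"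
    and "v < dim_col (hub_reduction h att r W
    (T - attach_mat h (att k) h r * W * (attach_mat h (att k) h r)\<^sup>T) k)"
  then have u: "u < h" and v: "v < h" by (simp_all add: hub_reduction_def)
  let ?X = "attach_mat h (att k) h r * W * (attach_mat h (att k) h r)\<^sup>T"
  have "(T - ?X) $$ (u, v) = T $$ (u, v) - ?X $$ (u, v)"
    using u v W by (intro index_minus_mat) auto
  then show "hub_reduction h att r W T (Suc k) $$ (u, v) = hub_reduction h att r W (T - ?X) k $$ (u, v)"
    using u v attach_sandwich_entry[OF W, of u h v h "att k"]
    by (simp add: hub_reduction_def del: index_mult_mat)
qed (simp_all add: hub_reduction_def)

lemma det_hub_blocks:
  fixes T :: "'a :: idom mat"
  assumes T: "T \<in> carrier_mat h h" and C: "C \<in> carrier_mat r m"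
    and Z: "Z \<in> carrier_mat m r" and B: "B \<in> carrier_mat m m"
    and Bi: "Bi \<in> carrier_mat m m" and inv: "B * Bi = 1\<^sub>m m"
  shows "det (hub_blocks h att r m T C Z B k) = det B ^ k * det (hub_reduction h att r (C * Bi * Z) T k)"
  using T
proof (induction k arbitrary: T)
  case 0
  then show ?case by (simp add: hub_blocks_0 hub_reduction_0)
next
  case (Suc k)
  let ?Q = "attach_mat h (att k) (h + k * m) r :: 'a mat"
  let ?Q' = "attach_mat h (att k) h r :: 'a mat"
  let ?W = "C * Bi * Z"
  have W: "?W \<in> carrier_mat r r" using C Bi Z by auto
  have Q: "?Q \<in> carrier_mat (h + k * m) r" by simp
  have T': "T - ?Q' * ?W * ?Q'\<^sup>T \<in> carrier_mat h h" using Suc.prems W by auto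
  have sandwich: "?Q * C * Bi * (Z * ?Q\<^sup>T) = ?Q * ?W * ?Q\<^sup>T"
  proof -
    have e1: "?Q * C * Bi * (Z * ?Q\<^sup>T) = ?Q * C * Bi * Z * ?Q\<^sup>T"
      using Q C Bi Z by (intro assoc_mult_mat[symmetric]) auto
    have e2: "?Q * C * Bi = ?Q * (C * Bi)" using Q C Bi by (rule assoc_mult_mat)
    have e3: "?Q * (C * Bi) * Z = ?Q * ?W" using Q C Bi Z by (intro assoc_mult_mat) auto
    show ?thesis unfolding e1 by (simp only: e2 e3)
  qed
  have "det (hub_blocks h att r m T C Z B (Suc k)) =
      det B * det (hub_blocks h att r m T C Z B k - ?Q * C * Bi * (Z * ?Q\<^sup>T))"
    unfolding hub_blocks_Suc[OF C Z B]
    by (rule det_schur_complement) (use C Z B Bi inv in auto)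
  also have "hub_blocks h att r m T C Z B k - ?Q * C * Bi * (Z * ?Q\<^sup>T) =
      hub_blocks h att r m (T - ?Q' * ?W * ?Q'\<^sup>T) C Z B k"
    unfolding sandwich by (rule hub_blocks_minus_attach_sandwich[OF Suc.prems W])
  also have "det \<dots> = det B ^ k * det (hub_reduction h att r ?W (T - ?Q' * ?W * ?Q'\<^sup>T) k)"
    by (rule Suc.IH[OF T'])
  also have "hub_reduction h att r ?W (T - ?Q' * ?W * ?Q'\<^sup>T) k = hub_reduction h att r ?W T (Suc k)"
    by (rule hub_reduction_Suc[OF Suc.prems W, symmetric])
  finally show ?case by simp
qed

lemma lower_right_block_hub_blocks:
  assumes T: "T \<in> carrier_mat (d + h) (d + h)"
  shows "lower_right_block d (hub_blocks (d + h) att r m T C Z B k) =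
    hub_blocks h (\<lambda>c a. if d \<le> att c a then att c a - d else h) r m (lower_right_block d T) C Z B k"
proof (rule eq_matI)
  fix x y
  assume "x < dim_row (hub_blocks h (\<lambda>c a. if d \<le> att c a then att c a - d else h) r m
      (lower_right_block d T) C Z B k)"
    and "y < dim_col (hub_blocks h (\<lambda>c a. if d \<le> att c a then att c a - d else h) r m
      (lower_right_block d T) C Z B k)"
  then have "x < h + k * m" "y < h + k * m" by auto
  moreover have "(att c a = x + d) = ((if d \<le> att c a then att c a - d else h) = x)" if "x < h" for c a x
    using that by auto
  ultimately show "lower_right_block d (hub_blocks (d + h) att r m T C Z B k) $$ (x, y) =
    hub_blocks h (\<lambda>c a. if d \<le> att c a then att c a - d else h) r m
      (lower_right_block d T) C Z B k $$ (x, y)"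
    using T by (auto simp: lower_right_block_def hub_blocks_def intro!: sum.cong)
qed (use T in \<open>auto simp: lower_right_block_def\<close>)

lemma hub_reduction_attach_arcs:
  fixes T W :: "'a :: {idom, ring_char_0} mat"
  assumes W: "W \<in> carrier_mat 2 2" and skew: "W\<^sup>T = - W" and T: "T \<in> carrier_mat h h"
    and T_arcs: "\<And>u v. u < h \<Longrightarrow> v < h \<Longrightarrow> T $$ (u, v) =
      (\<Sum>c<k. (if att c 0 = u \<and> att c 1 = v then 1 else 0) - (if att c 1 = u \<and> att c 0 = v then 1 else 0))"
  shows "hub_reduction h att 2 W T k = (1 - W $$ (0, 1)) \<cdot>\<^sub>m T"
proof (rule eq_matI)
  fix u v
  assume "u < dim_row ((1 - W $$ (0, 1)) \<cdot>\<^sub>m T)" "v < dim_col ((1 - W $$ (0, 1)) \<cdot>\<^sub>m T)"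
  then have u: "u < h" and v: "v < h" using T by auto
  note pair = skew_mat_2x2_pair_sum[OF W skew, of "att c" u v for c]
  have "(\<Sum>c<k. \<Sum>a<2. \<Sum>b<2. if att c a = u \<and> att c b = v then W $$ (a, b) else 0) =
      W $$ (0, 1) * T $$ (u, v)"
    unfolding T_arcs[OF u v] sum_distrib_left by (simp only: pair)
  then show "hub_reduction h att 2 W T k $$ (u, v) = ((1 - W $$ (0, 1)) \<cdot>\<^sub>m T) $$ (u, v)"
    using u v T by (simp add: hub_reduction_def left_diff_distrib)
qed (use T in \<open>auto simp: hub_reduction_def\<close>)

section \<open>The graphs \<open>H\<^sub>g\<close>\<close>

lemma hg_nv_ge_4: "4 \<le> hg_nv (Suc k)"
  by (induction k) auto

lemma hg_nv_Suc_Suc: "hg_nv (Suc (Suc k)) = 4 + 4 * (hg_nv (Suc k) - 2)"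
  using hg_nv_ge_4[of k] by simp

text \<open>
  Hub a of copy c (a = 0, 1 for v1, v2) is glued to hub \<open>hub_att c a\<close> of the larger graph;
  at hubs, \<open>hg_emb\<close> does not depend on its size argument.
\<close>
definition hub_att :: "nat \<Rightarrow> nat \<Rightarrow> nat" where
  "hub_att c a = hg_emb 0 c a"

lemma hg_emb_hub: "a < 2 \<Longrightarrow> hg_emb n c a = hub_att c a"
  by (auto simp: hub_att_def hg_emb_def less_2_cases_iff)

lemma hg_emb_interior: "2 \<le> x \<Longrightarrow> hg_emb n c x = 4 + c * (n - 2) + (x - 2)"
  by (simp add: hg_emb_def)

lemma less_4_cases: "(c :: nat) < 4 \<Longrightarrow> c = 0 \<or> c = 1 \<or> c = 2 \<or> c = 3"
  by auto

lemma hub_att_less_4: "c < 4 \<Longrightarrow> a < 2 \<Longrightarrow> hub_att c a < 4"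
  using less_4_cases[of c] by (auto simp: hub_att_def hg_emb_def less_2_cases_iff)

lemma hub_att_0_neq_1: "c < 4 \<Longrightarrow> hub_att c 0 \<noteq> hub_att c 1"
  using less_4_cases[of c] by (auto simp: hub_att_def hg_emb_def)

lemma hg_emb_less_4_iff: "c < 4 \<Longrightarrow> hg_emb n c x < 4 \<longleftrightarrow> x < 2"
  using hub_att_less_4 by (cases "x < 2") (auto simp: hg_emb_hub hg_emb_interior)

lemma hg_emb_less:
  assumes "c < 4" "x < n"
  shows "hg_emb n c x < 4 + 4 * (n - 2)"
proof (cases "x < 2")
  case True
  then show ?thesis using assms hub_att_less_4[of c x] by (simp add: hg_emb_hub)
next
  case False
  have "c * (n - 2) \<le> 3 * (n - 2)" and "x - 2 < n - 2" using assms False by auto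
  moreover have "hg_emb n c x = 4 + c * (n - 2) + (x - 2)" using False by (simp add: hg_emb_interior)
  ultimately show ?thesis by linarith
qed

lemma hg_emb_interior_inj:
  assumes "i < 4" "j < 4" "a < n" "b < n" "2 \<le> a" and e: "hg_emb n i a = hg_emb n j b"
  shows "i = j \<and> a = b"
proof -
  have "2 \<le> b"
    using e assms hg_emb_less_4_iff[of i n a] hg_emb_less_4_iff[of j n b] by auto
  then have eq: "(a - 2) + i * (n - 2) = (b - 2) + j * (n - 2)" using e assms by (simp add: hg_emb_interior)
  have "a - 2 < n - 2" "b - 2 < n - 2" using assms \<open>2 \<le> b\<close> by auto
  then have "i = j" "a - 2 = b - 2"
    using arg_cong[OF eq, of "\<lambda>x. x div (n - 2)"] arg_cong[OF eq, of "\<lambda>x. x mod (n - 2)"] by simp_all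
  then show ?thesis using assms \<open>2 \<le> b\<close> by auto
qed

lemma hg_emb_inj:
  assumes "i < 4" "a < n" "b < n" "hg_emb n i a = hg_emb n i b"
  shows "a = b"
proof (cases "2 \<le> a \<or> 2 \<le> b")
  case True
  then show ?thesis using hg_emb_interior_inj assms by metis
next
  case False
  then have "a < 2" "b < 2" by auto
  then show ?thesis using assms hub_att_0_neq_1[of i] by (auto simp: hg_emb_hub less_2_cases_iff)
qed

lemma hg_emb_decode:
  assumes "2 < n" "4 \<le> w" "w < 4 + 4 * (n - 2)"
  obtains c x where "c < 4" "2 \<le> x" "x < n" "hg_emb n c x = w"
    "(w - 4) div (n - 2) = c" "(w - 4) mod (n - 2) = x - 2"
proof (rule that[of "(w - 4) div (n - 2)" "(w - 4) mod (n - 2) + 2"])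
  show "(w - 4) div (n - 2) < 4" by (rule less_mult_imp_div_less) (use assms in simp)
  have "(w - 4) mod (n - 2) < n - 2" using assms by simp
  then show "(w - 4) mod (n - 2) + 2 < n" by linarith
  have "(w - 4) div (n - 2) * (n - 2) + (w - 4) mod (n - 2) = w - 4" by (rule div_mult_mod_eq)
  moreover have "hg_emb n ((w - 4) div (n - 2)) ((w - 4) mod (n - 2) + 2) =
      4 + (w - 4) div (n - 2) * (n - 2) + (w - 4) mod (n - 2)"
    by (simp add: hg_emb_interior)
  ultimately show "hg_emb n ((w - 4) div (n - 2)) ((w - 4) mod (n - 2) + 2) = w"
    using assms by linarith
qed simp_all

lemma hg_arcs_Suc_Suc_iff:
  "(p, q) \<in> hg_arcs (Suc (Suc k)) \<longleftrightarrow> (\<exists>i<4. \<exists>a b. (a, b) \<in> hg_arcs (Suc k) \<and>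
     p = hg_emb (hg_nv (Suc k)) i a \<and> q = hg_emb (hg_nv (Suc k)) i b)"
  by (simp only: hg_arcs.simps) force

lemma hg_arcs_bound: "(a, b) \<in> hg_arcs (Suc k) \<Longrightarrow> a < hg_nv (Suc k) \<and> b < hg_nv (Suc k)"
proof (induction k arbitrary: a b)
  case (Suc k)
  then obtain i x y where i: "i < 4" and xy: "(x, y) \<in> hg_arcs (Suc k)"
    and "a = hg_emb (hg_nv (Suc k)) i x" "b = hg_emb (hg_nv (Suc k)) i y"
    unfolding hg_arcs_Suc_Suc_iff by blast
  then show ?case unfolding hg_nv_Suc_Suc using Suc.IH[OF xy] hg_emb_less[OF i] by auto
qed auto

lemma hg_arcs_copy_iff:
  assumes "i < 4" "a < hg_nv (Suc k)" "b < hg_nv (Suc k)" "2 \<le> a \<or> 2 \<le> b"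
  shows "(hg_emb (hg_nv (Suc k)) i a, hg_emb (hg_nv (Suc k)) i b) \<in> hg_arcs (Suc (Suc k)) \<longleftrightarrow>
    (a, b) \<in> hg_arcs (Suc k)"
proof
  let ?e = "hg_emb (hg_nv (Suc k))"
  assume "(?e i a, ?e i b) \<in> hg_arcs (Suc (Suc k))"
  then obtain j c d where j: "j < 4" and cd: "(c, d) \<in> hg_arcs (Suc k)"
    and ac: "?e i a = ?e j c" and bd: "?e i b = ?e j d"
    unfolding hg_arcs_Suc_Suc_iff by blast
  have c: "c < hg_nv (Suc k)" and d: "d < hg_nv (Suc k)" using hg_arcs_bound[OF cd] by auto
  have "i = j \<and> a = c \<and> b = d"
    using assms(4)
  proof
    assume "2 \<le> a"
    with hg_emb_interior_inj[OF assms(1) j assms(2) c this ac] show ?thesis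
      using hg_emb_inj[OF assms(1) assms(3) d] bd by auto
  next
    assume "2 \<le> b"
    with hg_emb_interior_inj[OF assms(1) j assms(3) d this bd] show ?thesis
      using hg_emb_inj[OF assms(1) assms(2) c] ac by auto
  qed
  with cd show "(a, b) \<in> hg_arcs (Suc k)" by simp
next
  assume "(a, b) \<in> hg_arcs (Suc k)"
  with assms(1) show "(hg_emb (hg_nv (Suc k)) i a, hg_emb (hg_nv (Suc k)) i b) \<in> hg_arcs (Suc (Suc k))"
    unfolding hg_arcs_Suc_Suc_iff by blast
qed

lemma hg_arcs_interior_copy:
  assumes "i < 4" "a < hg_nv (Suc k)" "2 \<le> a"
    and "(hg_emb (hg_nv (Suc k)) i a, q) \<in> hg_arcs (Suc (Suc k)) \<or>
      (q, hg_emb (hg_nv (Suc k)) i a) \<in> hg_arcs (Suc (Suc k))"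
  shows "\<exists>b < hg_nv (Suc k). q = hg_emb (hg_nv (Suc k)) i b"
proof -
  obtain j c d where j: "j < 4" and cd: "(c, d) \<in> hg_arcs (Suc k)"
    and "hg_emb (hg_nv (Suc k)) i a = hg_emb (hg_nv (Suc k)) j c \<and> q = hg_emb (hg_nv (Suc k)) j d \<or>
      hg_emb (hg_nv (Suc k)) i a = hg_emb (hg_nv (Suc k)) j d \<and> q = hg_emb (hg_nv (Suc k)) j c"
    using assms(4) unfolding hg_arcs_Suc_Suc_iff by blast
  moreover have "c < hg_nv (Suc k)" "d < hg_nv (Suc k)" using hg_arcs_bound[OF cd] by auto
  ultimately show ?thesis using hg_emb_interior_inj[OF assms(1) j assms(2)] assms(3) by metis
qed

lemma hg_arcs_1: "hg_arcs 1 = {(0, 1), (0, 2), (3, 1), (2, 3)}"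
  by (simp add: One_nat_def)

lemma hg_arcs_1_eq: "hg_arcs 1 = {(hub_att c 0, hub_att c 1) | c. c < 4}"
proof -
  have "{(hub_att c 0, hub_att c 1) | c. c < 4} = (\<lambda>c. (hub_att c 0, hub_att c 1)) ` {0, 1, 2, 3}"
    using less_4_cases by fastforce
  then show ?thesis by (auto simp: hub_att_def hg_emb_def)
qed

lemma hub_att_not_reversed: "i < 4 \<Longrightarrow> j < 4 \<Longrightarrow> hub_att i 0 = hub_att j 1 \<Longrightarrow> hub_att i 1 \<noteq> hub_att j 0"
  using less_4_cases[of i] less_4_cases[of j] by (auto simp: hub_att_def hg_emb_def)

lemma hg_arcs_asym_hub_arc:
  "(\<forall>a b. (a, b) \<in> hg_arcs (Suc k) \<longrightarrow> (b, a) \<notin> hg_arcs (Suc k)) \<and> (0, 1) \<in> hg_arcs (Suc k)"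
proof (induction k)
  case 0
  then show ?case by auto
next
  case (Suc k)
  let ?e = "hg_emb (hg_nv (Suc k))"
  have hubs: "a = 0 \<and> b = 1" if "(a, b) \<in> hg_arcs (Suc k)" "a < 2" "b < 2" for a b
    using Suc.IH that by (auto simp: less_2_cases_iff)
  have "(?e 3 0, ?e 3 1) \<in> hg_arcs (Suc (Suc k))"
    unfolding hg_arcs_Suc_Suc_iff by (rule exI[of _ 3]) (use Suc.IH in auto)
  then have arc_0_1: "(0, 1) \<in> hg_arcs (Suc (Suc k))" by (simp add: hg_emb_def)
  have "(q, p) \<notin> hg_arcs (Suc (Suc k))" if "(p, q) \<in> hg_arcs (Suc (Suc k))" for p q
  proof
    assume qp: "(q, p) \<in> hg_arcs (Suc (Suc k))"
    from that obtain i a b where i: "i < 4" and ab: "(a, b) \<in> hg_arcs (Suc k)"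
      and p: "p = ?e i a" and q: "q = ?e i b"
      unfolding hg_arcs_Suc_Suc_iff by blast
    have a: "a < hg_nv (Suc k)" and b: "b < hg_nv (Suc k)" using hg_arcs_bound[OF ab] by auto
    show False
    proof (cases "2 \<le> a \<or> 2 \<le> b")
      case True
      then have "(b, a) \<in> hg_arcs (Suc k)"
        using qp hg_arcs_copy_iff[OF i b a] unfolding p q by auto
      with ab Suc.IH show False by blast
    next
      case False
      with hubs[OF ab] have "p = hub_att i 0" "q = hub_att i 1"
        unfolding p q by (auto simp: hg_emb_hub)
      from qp obtain j c d where j: "j < 4" and cd: "(c, d) \<in> hg_arcs (Suc k)"
        and qc: "q = ?e j c" and pd: "p = ?e j d"
        unfolding hg_arcs_Suc_Suc_iff by blast
      have "p < 4" "q < 4"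
        using hub_att_less_4[OF i] \<open>p = hub_att i 0\<close> \<open>q = hub_att i 1\<close> by auto
      then have "c < 2" "d < 2" using hg_emb_less_4_iff[OF j] qc pd by auto
      with hubs[OF cd] have "q = hub_att j 0" "p = hub_att j 1" using qc pd by (auto simp: hg_emb_hub)
      with \<open>p = hub_att i 0\<close> \<open>q = hub_att i 1\<close> show False
        using hub_att_not_reversed[OF i j] by simp
    qed
  qed
  with arc_0_1 show ?case by blast
qed

lemma hg_arcs_asym: "(a, b) \<in> hg_arcs (Suc k) \<Longrightarrow> (b, a) \<notin> hg_arcs (Suc k)"
  using hg_arcs_asym_hub_arc by blast

lemma hg_arcs_hubs: "(a, b) \<in> hg_arcs (Suc k) \<Longrightarrow> a < 2 \<Longrightarrow> b < 2 \<Longrightarrow> a = 0 \<and> b = 1"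
  using hg_arcs_asym_hub_arc[of k] by (auto simp: less_2_cases_iff)

lemma hg_arcs_hubs_iff:
  assumes "u < 4" "v < 4"
  shows "(u, v) \<in> hg_arcs (Suc (Suc k)) \<longleftrightarrow> (u, v) \<in> hg_arcs 1"
proof
  assume "(u, v) \<in> hg_arcs (Suc (Suc k))"
  then obtain i a b where i: "i < 4" and ab: "(a, b) \<in> hg_arcs (Suc k)"
    and "u = hg_emb (hg_nv (Suc k)) i a" "v = hg_emb (hg_nv (Suc k)) i b"
    unfolding hg_arcs_Suc_Suc_iff by blast
  moreover from this have "a < 2" "b < 2" using assms hg_emb_less_4_iff[OF i] by auto
  ultimately show "(u, v) \<in> hg_arcs 1"
    using hg_arcs_hubs[OF ab] unfolding hg_arcs_1_eq by (auto simp: hg_emb_hub)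
next
  assume "(u, v) \<in> hg_arcs 1"
  then obtain c where "c < 4" "u = hg_emb (hg_nv (Suc k)) c 0" "v = hg_emb (hg_nv (Suc k)) c 1"
    unfolding hg_arcs_1_eq by (auto simp: hg_emb_hub)
  then show "(u, v) \<in> hg_arcs (Suc (Suc k))"
    using hg_arcs_asym_hub_arc[of k] unfolding hg_arcs_Suc_Suc_iff by blast
qed

section \<open>Skew adjacency matrices\<close>

declare hg_arcs.simps(3) [simp del]

definition arc_sign :: "(nat \<times> nat) set \<Rightarrow> nat \<Rightarrow> nat \<Rightarrow> real" where
  "arc_sign A u v = (if (u, v) \<in> A then 1 else if (v, u) \<in> A then -1 else 0)"

lemma arc_sign_swap: "(\<And>a b. (a, b) \<in> A \<Longrightarrow> (b, a) \<notin> A) \<Longrightarrow> arc_sign A v u = - arc_sign A u v"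
  by (auto simp: arc_sign_def)

text \<open>Over the reals, so that the interior blocks can be inverted.\<close>
definition skew_adj_real :: "nat \<Rightarrow> real mat" where
  "skew_adj_real g = map_mat real_of_int (skew_adj g)"

lemma skew_adj_real_dim [simp]:
  "dim_row (skew_adj_real g) = hg_nv g" "dim_col (skew_adj_real g) = hg_nv g"
  by (simp_all add: skew_adj_real_def skew_adj_def)

lemma skew_adj_real_carrier [simp]: "skew_adj_real g \<in> carrier_mat (hg_nv g) (hg_nv g)"
  by (simp add: carrier_matI)

lemma skew_adj_real_index:
  "u < hg_nv g \<Longrightarrow> v < hg_nv g \<Longrightarrow> skew_adj_real g $$ (u, v) = arc_sign (hg_arcs g) u v"
  by (simp add: skew_adj_real_def skew_adj_def arc_sign_def)

lemma skew_adj_real_transpose: "(skew_adj_real (Suc k))\<^sup>T = - skew_adj_real (Suc k)"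
proof (rule eq_matI)
  fix u v
  assume "u < dim_row (- skew_adj_real (Suc k))" "v < dim_col (- skew_adj_real (Suc k))"
  then show "(skew_adj_real (Suc k))\<^sup>T $$ (u, v) = (- skew_adj_real (Suc k)) $$ (u, v)"
    using arc_sign_swap[OF hg_arcs_asym, of k v u] by (simp add: skew_adj_real_index)
qed simp_all

lemma skew_adj_real_0_1: "skew_adj_real (Suc k) $$ (0, 1) = 1"
  using hg_nv_ge_4[of k] hg_arcs_asym_hub_arc[of k] by (simp add: skew_adj_real_index arc_sign_def)

lemma arc_sign_hubs:
  "u < 4 \<Longrightarrow> v < 4 \<Longrightarrow> arc_sign (hg_arcs (Suc (Suc k))) u v = arc_sign (hg_arcs 1) u v"
  by (simp add: arc_sign_def hg_arcs_hubs_iff)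

lemma arc_sign_copy:
  assumes "i < 4" "x < hg_nv (Suc k)" "y < hg_nv (Suc k)" "2 \<le> x \<or> 2 \<le> y"
  shows "arc_sign (hg_arcs (Suc (Suc k))) (hg_emb (hg_nv (Suc k)) i x) (hg_emb (hg_nv (Suc k)) i y) =
    arc_sign (hg_arcs (Suc k)) x y"
  using hg_arcs_copy_iff[OF assms] hg_arcs_copy_iff[OF assms(1,3,2)] assms(4)
  by (auto simp: arc_sign_def)

lemma arc_sign_other_copy:
  assumes "i < 4" "j < 4" "i \<noteq> j" "x < hg_nv (Suc k)" "2 \<le> x" "y < hg_nv (Suc k)" "2 \<le> y"
  shows "arc_sign (hg_arcs (Suc (Suc k))) (hg_emb (hg_nv (Suc k)) i x) (hg_emb (hg_nv (Suc k)) j y) = 0"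
proof -
  have "\<not> (\<exists>b < hg_nv (Suc k). hg_emb (hg_nv (Suc k)) j y = hg_emb (hg_nv (Suc k)) i b)"
    using hg_emb_interior_inj[OF assms(2,1,6)] assms(3,7) by metis
  then show ?thesis
    using hg_arcs_interior_copy[OF assms(1,4,5)] by (auto simp: arc_sign_def)
qed

lemma arc_sign_hub_interior:
  assumes u: "u < 4" and i: "i < 4" and y: "y < hg_nv (Suc k)" "2 \<le> y"
  shows "arc_sign (hg_arcs (Suc (Suc k))) u (hg_emb (hg_nv (Suc k)) i y) =
    (\<Sum>a<2. if hub_att i a = u then arc_sign (hg_arcs (Suc k)) a y else 0)"
proof (cases "\<exists>a<2. hub_att i a = u")
  case True
  then obtain a where a: "a < 2" "hub_att i a = u" by blast
  have "2 < hg_nv (Suc k)" using y by simp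
  then have "(\<Sum>a'<2. if hub_att i a' = u then arc_sign (hg_arcs (Suc k)) a' y else 0) =
      arc_sign (hg_arcs (Suc k)) a y"
    using a hub_att_0_neq_1[OF i] by (auto simp: sum_lessThan_2 less_2_cases_iff)
  moreover have "a < hg_nv (Suc k)" using a y by simp
  ultimately show ?thesis
    using arc_sign_copy[OF i _ y(1)] a y(2) by (metis hg_emb_hub)
next
  case False
  have "\<not> (\<exists>b < hg_nv (Suc k). u = hg_emb (hg_nv (Suc k)) i b)"
    using False u hg_emb_less_4_iff[OF i] by (metis hg_emb_hub)
  then have "arc_sign (hg_arcs (Suc (Suc k))) u (hg_emb (hg_nv (Suc k)) i y) = 0"
    using hg_arcs_interior_copy[OF i y(1) y(2), of u] by (auto simp: arc_sign_def)
  with False show ?thesis by simp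
qed

lemma arc_sign_interior_hub:
  assumes "u < 4" "i < 4" "y < hg_nv (Suc k)" "2 \<le> y"
  shows "arc_sign (hg_arcs (Suc (Suc k))) (hg_emb (hg_nv (Suc k)) i y) u =
    (\<Sum>a<2. if hub_att i a = u then arc_sign (hg_arcs (Suc k)) y a else 0)"
proof -
  have swap: "arc_sign (hg_arcs (Suc g)) q p = - arc_sign (hg_arcs (Suc g)) p q" for g p q
    by (rule arc_sign_swap) (rule hg_arcs_asym)
  have "arc_sign (hg_arcs (Suc (Suc k))) (hg_emb (hg_nv (Suc k)) i y) u =
      - (\<Sum>a<2. if hub_att i a = u then arc_sign (hg_arcs (Suc k)) a y else 0)"
    using arc_sign_hub_interior[OF assms] swap[of "Suc k" u] by simp
  also have "\<dots> = (\<Sum>a<2. if hub_att i a = u then arc_sign (hg_arcs (Suc k)) y a else 0)"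
    unfolding sum_negf[symmetric] by (intro sum.cong) (auto simp: swap[of k _ y])
  finally show ?thesis .
qed

lemma Suc_Suc_diff_2: "2 \<le> x \<Longrightarrow> Suc (Suc (x - 2)) = x"
  by arith

lemma skew_adj_real_Suc_Suc:
  assumes split: "split_block (skew_adj_real (Suc k)) 2 2 = (X, C, Z, B)"
  shows "skew_adj_real (Suc (Suc k)) =
    hub_blocks 4 hub_att 2 (hg_nv (Suc k) - 2) (skew_adj_real 1) C Z B 4"
proof (rule eq_matI)
  let ?n = "hg_nv (Suc k)"
  let ?m = "hg_nv (Suc k) - 2"
  let ?A = "hg_arcs (Suc k)"
  let ?A' = "hg_arcs (Suc (Suc k))"
  have n: "2 < ?n" using hg_nv_ge_4[of k] by simp
  have C: "C $$ (a, x) = arc_sign ?A a (x + 2)" if "a < 2" "x < ?m" for a x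
    using split that by (auto simp: split_block_def Let_def skew_adj_real_index)
  have Z: "Z $$ (x, a) = arc_sign ?A (x + 2) a" if "a < 2" "x < ?m" for a x
    using split that by (auto simp: split_block_def Let_def skew_adj_real_index)
  have B: "B $$ (x, y) = arc_sign ?A (x + 2) (y + 2)" if "x < ?m" "y < ?m" for x y
    using split that by (auto simp: split_block_def Let_def skew_adj_real_index)
  fix u v
  assume "u < dim_row (hub_blocks 4 hub_att 2 ?m (skew_adj_real 1) C Z B 4)"
    and "v < dim_col (hub_blocks 4 hub_att 2 ?m (skew_adj_real 1) C Z B 4)"
  then have u: "u < 4 + 4 * ?m" and v: "v < 4 + 4 * ?m" by auto
  have "skew_adj_real (Suc (Suc k)) $$ (u, v) = arc_sign ?A' u v"
    using u v by (simp add: skew_adj_real_index hg_nv_Suc_Suc del: hg_nv.simps)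
  also have "\<dots> = hub_blocks 4 hub_att 2 ?m (skew_adj_real 1) C Z B 4 $$ (u, v)"
  proof (cases "u < 4"; cases "v < 4")
    assume "u < 4" "v < 4"
    then show ?thesis using u v by (simp add: hub_blocks_def arc_sign_hubs skew_adj_real_index)
  next
    assume u4: "u < 4" and v4: "\<not> v < 4"
    then obtain c y where dec: "c < 4" "2 \<le> y" "y < ?n" "hg_emb ?n c y = v"
      "(v - 4) div ?m = c" "(v - 4) mod ?m = y - 2"
      using hg_emb_decode[OF n _ v] by auto
    have "hub_blocks 4 hub_att 2 ?m (skew_adj_real 1) C Z B 4 $$ (u, v) =
        (\<Sum>a<2. if hub_att c a = u then C $$ (a, y - 2) else 0)"
      using u4 v4 u v unfolding dec(5,6)[symmetric] by (simp add: hub_blocks_def)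
    also have "\<dots> = (\<Sum>a<2. if hub_att c a = u then arc_sign ?A a y else 0)"
      using C[of _ "y - 2"] dec by (intro sum.cong) (auto simp: Suc_Suc_diff_2)
    also have "\<dots> = arc_sign ?A' u v" using arc_sign_hub_interior[of u c y k] u4 dec by simp
    finally show ?thesis ..
  next
    assume u4: "\<not> u < 4" and v4: "v < 4"
    then obtain c y where dec: "c < 4" "2 \<le> y" "y < ?n" "hg_emb ?n c y = u"
      "(u - 4) div ?m = c" "(u - 4) mod ?m = y - 2"
      using hg_emb_decode[OF n _ u] by auto
    have "hub_blocks 4 hub_att 2 ?m (skew_adj_real 1) C Z B 4 $$ (u, v) =
        (\<Sum>a<2. if hub_att c a = v then Z $$ (y - 2, a) else 0)"
      using u4 v4 u v unfolding dec(5,6)[symmetric] by (simp add: hub_blocks_def)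
    also have "\<dots> = (\<Sum>a<2. if hub_att c a = v then arc_sign ?A y a else 0)"
      using Z[of _ "y - 2"] dec by (intro sum.cong) (auto simp: Suc_Suc_diff_2)
    also have "\<dots> = arc_sign ?A' u v" using arc_sign_interior_hub[of v c y k] v4 dec by simp
    finally show ?thesis ..
  next
    assume u4: "\<not> u < 4" and v4: "\<not> v < 4"
    obtain cu xu where cu: "cu < 4" "2 \<le> xu" "xu < ?n" "hg_emb ?n cu xu = u"
      "(u - 4) div ?m = cu" "(u - 4) mod ?m = xu - 2"
      using hg_emb_decode[OF n _ u] u4 by auto
    obtain cv xv where cv: "cv < 4" "2 \<le> xv" "xv < ?n" "hg_emb ?n cv xv = v"
      "(v - 4) div ?m = cv" "(v - 4) mod ?m = xv - 2"
      using hg_emb_decode[OF n _ v] v4 by auto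
    have "hub_blocks 4 hub_att 2 ?m (skew_adj_real 1) C Z B 4 $$ (u, v) =
        (if cu = cv then B $$ (xu - 2, xv - 2) else 0)"
      using u4 v4 u v unfolding cu(5,6)[symmetric] cv(5,6)[symmetric] by (simp add: hub_blocks_def)
    also have "B $$ (xu - 2, xv - 2) = arc_sign ?A xu xv"
      using B[of "xu - 2" "xv - 2"] cu(2,3) cv(2,3) by (simp add: Suc_Suc_diff_2)
    also have "(if cu = cv then arc_sign ?A xu xv else 0) = arc_sign ?A' u v"
      using arc_sign_copy[of cu xu k xv] arc_sign_other_copy[of cu cv xu k xv] cu cv
      by (cases "cu = cv") auto
    finally show ?thesis ..
  qed
  finally show "skew_adj_real (Suc (Suc k)) $$ (u, v) =
    hub_blocks 4 hub_att 2 ?m (skew_adj_real 1) C Z B 4 $$ (u, v)" .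
qed (simp_all add: hg_nv_Suc_Suc del: hg_nv.simps)

lemma skew_adj_real_1: "skew_adj_real 1 = mat 4 4 (\<lambda>(u, v). arc_sign (hg_arcs 1) u v)"
  by (rule eq_matI) (auto simp: skew_adj_real_index)

lemma skew_adj_real_1_hub_arcs:
  assumes "u < 4" "v < 4"
  shows "skew_adj_real 1 $$ (u, v) = (\<Sum>c<4.
    (if hub_att c 0 = u \<and> hub_att c 1 = v then 1 else 0) - (if hub_att c 1 = u \<and> hub_att c 0 = v then 1 else 0))"
  using less_4_cases[OF assms(1)] less_4_cases[OF assms(2)]
  by (auto simp: skew_adj_real_index sum_lessThan_4 arc_sign_def hg_arcs_1 hub_att_def hg_emb_def)

lemma lower_right_skew_adj_real_1_hub_arcs:
  assumes "u < 2" "v < 2"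
  defines "att \<equiv> \<lambda>c a. if 2 \<le> hub_att c a then hub_att c a - 2 else 2"
  shows "lower_right_block 2 (skew_adj_real 1) $$ (u, v) = (\<Sum>c<4.
    (if att c 0 = u \<and> att c 1 = v then 1 else 0) - (if att c 1 = u \<and> att c 0 = v then 1 else 0))"
  using assms(1,2)
  by (auto simp: att_def lower_right_block_def skew_adj_real_index sum_lessThan_4 arc_sign_def hg_arcs_1
      hub_att_def hg_emb_def less_2_cases_iff)

section \<open>Determinants of \<open>A\<^sub>g\<close>\<close>

lemma det_skew_adj_real_1: "det (skew_adj_real 1) = 4"
  unfolding skew_adj_real_1 det_mat_4x4
  by (simp add: sum_lessThan_4 det_mat_3x3 arc_sign_def hg_arcs_1)

lemma det_lower_right_skew_adj_real_1: "det (lower_right_block 2 (skew_adj_real 1)) = 1"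
proof -
  obtain X C Z B where split: "split_block (skew_adj_real 1) 2 2 = (X, C, Z, B)"
    by (metis prod_cases4)
  have M1: "skew_adj_real 1 \<in> carrier_mat (2 + 2) (2 + 2)"
    using skew_adj_real_carrier[of 1] by (simp add: One_nat_def)
  have "(skew_adj_real 1)\<^sup>T = - skew_adj_real 1"
    using skew_adj_real_transpose[of 0] by (simp add: One_nat_def)
  then have "B\<^sup>T = - B" using split_block_skew(3)[OF M1 _ split] by simp
  moreover have "B \<in> carrier_mat 2 2" "B $$ (0, 1) = 1"
    using split by (auto simp: split_block_def Let_def skew_adj_real_index arc_sign_def hg_arcs_1)
  ultimately have "det B = 1" using det_skew_mat_2x2[of B] by simp
  then show ?thesis using split_block_lower_right[OF split] by simp
qed

lemma det_skew_adj_real_Suc_Suc_blocks: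
  assumes split: "split_block (skew_adj_real (Suc k)) 2 2 = (X, C, Z, B)"
    and Bi: "Bi \<in> carrier_mat (hg_nv (Suc k) - 2) (hg_nv (Suc k) - 2)"
    and inv: "B * Bi = 1\<^sub>m (hg_nv (Suc k) - 2)"
  defines "s \<equiv> 1 - (C * Bi * Z) $$ (0, 1)"
  shows "det (skew_adj_real (Suc (Suc k))) = det B ^ 4 * (4 * s ^ 4)"
    and "det (lower_right_block 2 (skew_adj_real (Suc (Suc k)))) = det B ^ 4 * s ^ 2"
proof -
  let ?m = "hg_nv (Suc k) - 2"
  let ?att = "\<lambda>c a. if 2 \<le> hub_att c a then hub_att c a - 2 else 2"
  have M: "skew_adj_real (Suc k) \<in> carrier_mat (2 + ?m) (2 + ?m)"
    using hg_nv_ge_4[of k] by (simp add: carrier_matI)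
  have C: "C \<in> carrier_mat 2 ?m" and Z: "Z \<in> carrier_mat ?m 2" and B: "B \<in> carrier_mat ?m ?m"
    using split_block(2-4)[OF split, of ?m ?m] M by auto
  have W: "C * Bi * Z \<in> carrier_mat 2 2" using C Bi Z by auto
  have W_skew: "(C * Bi * Z)\<^sup>T = - (C * Bi * Z)"
    by (rule split_block_skew_sandwich[OF M skew_adj_real_transpose split Bi inv])
  have M1: "skew_adj_real 1 \<in> carrier_mat 4 4" and M1': "skew_adj_real 1 \<in> carrier_mat (2 + 2) (2 + 2)"
    using skew_adj_real_carrier[of 1] by (simp_all add: One_nat_def)
  have L1: "lower_right_block 2 (skew_adj_real 1) \<in> carrier_mat 2 2"
    using M1 by (simp add: lower_right_block_def)
  have "det (skew_adj_real (Suc (Suc k))) =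
      det B ^ 4 * det (hub_reduction 4 hub_att 2 (C * Bi * Z) (skew_adj_real 1) 4)"
    unfolding skew_adj_real_Suc_Suc[OF split] by (rule det_hub_blocks[OF M1 C Z B Bi inv])
  also have "hub_reduction 4 hub_att 2 (C * Bi * Z) (skew_adj_real 1) 4 = s \<cdot>\<^sub>m skew_adj_real 1"
    unfolding s_def by (rule hub_reduction_attach_arcs[OF W W_skew M1 skew_adj_real_1_hub_arcs])
  finally show "det (skew_adj_real (Suc (Suc k))) = det B ^ 4 * (4 * s ^ 4)"
    using M1 det_skew_adj_real_1 by simp
  have "lower_right_block 2 (skew_adj_real (Suc (Suc k))) =
      hub_blocks 2 ?att 2 ?m (lower_right_block 2 (skew_adj_real 1)) C Z B 4"
    using lower_right_block_hub_blocks[OF M1', of hub_att 2 ?m C Z B 4]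
    unfolding skew_adj_real_Suc_Suc[OF split] by simp
  then have "det (lower_right_block 2 (skew_adj_real (Suc (Suc k)))) =
      det B ^ 4 * det (hub_reduction 2 ?att 2 (C * Bi * Z) (lower_right_block 2 (skew_adj_real 1)) 4)"
    using det_hub_blocks[OF L1 C Z B Bi inv] by simp
  also have "hub_reduction 2 ?att 2 (C * Bi * Z) (lower_right_block 2 (skew_adj_real 1)) 4 =
      s \<cdot>\<^sub>m lower_right_block 2 (skew_adj_real 1)"
    unfolding s_def
    by (rule hub_reduction_attach_arcs[OF W W_skew L1 lower_right_skew_adj_real_1_hub_arcs])
  finally show "det (lower_right_block 2 (skew_adj_real (Suc (Suc k)))) = det B ^ 4 * s ^ 2"
    using L1 det_lower_right_skew_adj_real_1 by simp
qed

lemma det_skew_adj_real_Suc_Suc: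
  fixes k :: nat
  defines "B \<equiv> lower_right_block 2 (skew_adj_real (Suc k))"
  assumes "det B \<noteq> 0"
  obtains s where "det (skew_adj_real (Suc k)) = det B * s ^ 2"
    and "det (skew_adj_real (Suc (Suc k))) = det B ^ 4 * (4 * s ^ 4)"
    and "det (lower_right_block 2 (skew_adj_real (Suc (Suc k)))) = det B ^ 4 * s ^ 2"
proof -
  let ?M = "skew_adj_real (Suc k)"
  let ?m = "hg_nv (Suc k) - 2"
  have M: "?M \<in> carrier_mat (2 + ?m) (2 + ?m)"
    using hg_nv_ge_4[of k] by (simp add: carrier_matI)
  obtain X C Z B' where "split_block ?M 2 2 = (X, C, Z, B')"
    by (metis prod_cases4)
  with split_block_lower_right have split: "split_block ?M 2 2 = (X, C, Z, B)"
    unfolding B_def by blast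
  have "B \<in> carrier_mat ?m ?m" using split_block(4)[OF split, of ?m ?m] M by auto
  then obtain Bi where Bi: "Bi \<in> carrier_mat ?m ?m" and inv: "B * Bi = 1\<^sub>m ?m"
    using obtain_right_inverse_mat assms(2) by blast
  have "det ?M = det B * (?M $$ (0, 1) - (C * Bi * Z) $$ (0, 1)) ^ 2"
    by (rule det_skew_split_block_2[OF M skew_adj_real_transpose split Bi inv])
  then have "det ?M = det B * (1 - (C * Bi * Z) $$ (0, 1)) ^ 2"
    by (simp only: skew_adj_real_0_1)
  then show ?thesis
    using det_skew_adj_real_Suc_Suc_blocks[OF split Bi inv] by (rule that)
qed

fun lower_det_exp :: "nat \<Rightarrow> nat" where
  "lower_det_exp 0 = 0"
| "lower_det_exp (Suc k) = 4 * lower_det_exp k + Suc k"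

lemma lower_det_exp_closed_form: "9 * lower_det_exp k + 3 * Suc k + 1 = 4 ^ Suc k"
  by (induction k) simp_all

lemma det_skew_adj_real:
  "det (skew_adj_real (Suc k)) = 4 ^ (lower_det_exp k + Suc k) \<and>
    det (lower_right_block 2 (skew_adj_real (Suc k))) = 4 ^ lower_det_exp k"
proof (induction k)
  case 0
  show ?case using det_skew_adj_real_1 det_lower_right_skew_adj_real_1 by (simp add: One_nat_def)
next
  case (Suc k)
  let ?d = "det (lower_right_block 2 (skew_adj_real (Suc k)))"
  have d: "?d = 4 ^ lower_det_exp k" using Suc.IH by simp
  then have "?d \<noteq> 0" by simp
  then obtain s where s: "det (skew_adj_real (Suc k)) = ?d * s ^ 2"
    and next1: "det (skew_adj_real (Suc (Suc k))) = ?d ^ 4 * (4 * s ^ 4)"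
    and next2: "det (lower_right_block 2 (skew_adj_real (Suc (Suc k)))) = ?d ^ 4 * s ^ 2"
    by (rule det_skew_adj_real_Suc_Suc)
  have "?d * s ^ 2 = ?d * 4 ^ Suc k" using s Suc.IH d by (simp add: power_add)
  then have s2: "s ^ 2 = 4 ^ Suc k" using d by simp
  have d4: "?d ^ 4 = 4 ^ (4 * lower_det_exp k)" unfolding d by (simp flip: power_mult add: mult.commute)
  have "s ^ 4 = (s ^ 2) ^ 2" by simp
  then show ?case
    using next1 next2 s2 d4 by (simp flip: power_add power_mult add: algebra_simps)
qed

theorem lemma9:
  fixes g :: nat
  assumes "g \<ge> 1"
  shows "real_of_int (det (skew_adj g)) =
           4 powr ((1/9) * 4 ^ g + (2/3) * real g - 1/9)"
proof -
  obtain k where g: "g = Suc k" using assms by (cases g) auto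
  have "real_of_int (det (skew_adj g)) = det (skew_adj_real g)"
    unfolding skew_adj_real_def by (simp add: of_int_hom.hom_det)
  also have "\<dots> = 4 ^ (lower_det_exp k + g)" using det_skew_adj_real[of k] g by simp
  also have "\<dots> = 4 powr real (lower_det_exp k + g)" by (rule powr_realpow[symmetric]) simp
  also have "real (lower_det_exp k + g) = (1/9) * 4 ^ g + (2/3) * real g - 1/9"
  proof -
    have "9 * real (lower_det_exp k) + 3 * real g + 1 = 4 ^ g"
      using arg_cong[OF lower_det_exp_closed_form[of k], of real] g by simp
    then show ?thesis by simp
  qed
  finally show ?thesis .
qed

end
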